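(* Let $A$ be an algebra in a semidegenerate congruence modular variety such that $K(A)$ is closed under the commutator. If the map $B(Con(A))\rightarrow Clop(Spec(A))$, $\alpha\mapsto D_A(\alpha)$, is a Boolean isomorphism, then the reticulation of $A$ preserves the Boolean center.
   Context: $\mathcal{V}$ is a congruence modular, semidegenerate variety (no nontrivial algebra has a one-element subalgebra; equivalently $\nabla_A$ is compact) of finite signature; $A\in\mathcal{V}$. $Con(A)$ is the congruence lattice with bounds $\Delta_A,\nabla_A$, $[\cdot,\cdot]$ the Freese–McKenzie commutator, $K(A)$ the compact congruences. A congruence $\phi\neq\nabla_A$ is prime if $[\alpha,\beta]\subseteq\phi$ implies $\alpha\subseteq\phi$ or $\beta\subseteq\phi$; $Spec(A)$ is the set of primes; $\rho(\theta)$ is the intersection of primes containing $\theta$; $V_A(\theta)=\{\phi\in Spec(A):\theta\subseteq\phi\}$, $D_A(\theta)=Spec(A)\setminus V_A(\theta)$, and the sets $D_A(\theta)$ form the topology on $Spec(A)$. $Clop(X)$ is the Boolean algebra of clopen subsets of $X$. $B(Con(A))$ is the Boolean algebra of complemented elements of $Con(A)$; for $\alpha\in B(Con(A))$, $D_A(\alpha)$ is clopen. The reticulation $L(A)=K(A)/{\equiv}$ ($\alpha\equiv\beta$ iff $\rho(\alpha)=\rho(\beta)$) is a bounded distributive lattice with canonical map $\lambda_A:K(A)\to L(A)$, which maps $B(Con(A))$ injectively into $B(L(A))$ (complemented elements of $L(A)$). The reticulation of $A$ preserves the Boolean center if $\lambda_A|_{B(Con(A))}:B(Con(A))\to B(L(A))$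 is surjective. *)

theory Defs
  imports Main
begin

text \<open>A signature is a type of operation symbols 'f together with an arity
function ar. An algebra of that signature is a carrier set together with an
interpretation of every operation symbol (only its values on argument lists of
the right length inside the carrier matter).\<close>

record ('a, 'f) alg =
  alg_carrier :: "'a set"
  alg_op :: "'f \<Rightarrow> 'a list \<Rightarrow> 'a"

definition is_algebra :: "('f \<Rightarrow> nat) \<Rightarrow> ('a, 'f) alg \<Rightarrow> bool" where
  "is_algebra ar A \<longleftrightarrow> alg_carrier A \<noteq> {} \<and>
     (\<forall>f xs. length xs = ar f \<and> set xs \<subseteq> alg_carrier A \<longrightarrow> alg_op A f xs \<in> alg_carrier A)"

datatype ('f, 'v) trm = Var 'v | Fn 'f "('f, 'v) trm list"

fun wf_trm :: "('f \<Rightarrow> nat) \<Rightarrow> ('f, 'v) trm \<Rightarrow> bool" where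
  "wf_trm ar (Var x) = True"
| "wf_trm ar (Fn f ts) = (length ts = ar f \<and> (\<forall>t\<in>set ts. wf_trm ar t))"

fun eval_trm :: "('a, 'f) alg \<Rightarrow> ('v \<Rightarrow> 'a) \<Rightarrow> ('f, 'v) trm \<Rightarrow> 'a" where
  "eval_trm A v (Var x) = v x"
| "eval_trm A v (Fn f ts) = alg_op A f (map (eval_trm A v) ts)"

definition satisfies :: "('a, 'f) alg \<Rightarrow> ('f, nat) trm \<times> ('f, nat) trm \<Rightarrow> bool" where
  "satisfies A e \<longleftrightarrow> (\<forall>v. range v \<subseteq> alg_carrier A \<longrightarrow> eval_trm A v (fst e) = eval_trm A v (snd e))"

definition in_variety :: "('f \<Rightarrow> nat) \<Rightarrow> (('f, nat) trm \<times> ('f, nat) trm) set \<Rightarrow> ('a, 'f) alg \<Rightarrow> bool" where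
  "in_variety ar \<Sigma> A \<longleftrightarrow> is_algebra ar A \<and> (\<forall>e\<in>\<Sigma>. satisfies A e)"

definition wf_identities :: "('f \<Rightarrow> nat) \<Rightarrow> (('f, nat) trm \<times> ('f, nat) trm) set \<Rightarrow> bool" where
  "wf_identities ar \<Sigma> \<longleftrightarrow> (\<forall>e\<in>\<Sigma>. wf_trm ar (fst e) \<and> wf_trm ar (snd e))"

definition Con :: "('f \<Rightarrow> nat) \<Rightarrow> ('a, 'f) alg \<Rightarrow> ('a \<times> 'a) set set" where
  "Con ar A = {\<theta>. equiv (alg_carrier A) \<theta> \<and>
     (\<forall>f xs ys. length xs = ar f \<and> length ys = ar f \<and>
        (\<forall>i<ar f. (xs ! i, ys ! i) \<in> \<theta>) \<longrightarrow> (alg_op A f xs, alg_op A f ys) \<in> \<theta>)}"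

definition Delta :: "('a, 'f) alg \<Rightarrow> ('a \<times> 'a) set" where
  "Delta A = Id_on (alg_carrier A)"

definition Nabla :: "('a, 'f) alg \<Rightarrow> ('a \<times> 'a) set" where
  "Nabla A = alg_carrier A \<times> alg_carrier A"

definition Cg :: "('f \<Rightarrow> nat) \<Rightarrow> ('a, 'f) alg \<Rightarrow> ('a \<times> 'a) set \<Rightarrow> ('a \<times> 'a) set" where
  "Cg ar A S = Nabla A \<inter> \<Inter>{\<theta> \<in> Con ar A. S \<subseteq> \<theta>}"

definition cjoin :: "('f \<Rightarrow> nat) \<Rightarrow> ('a, 'f) alg \<Rightarrow> ('a \<times> 'a) set \<Rightarrow> ('a \<times> 'a) set \<Rightarrow> ('a \<times> 'a) set" where
  "cjoin ar A \<alpha> \<beta> = Cg ar A (\<alpha> \<union> \<beta>)"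

definition K :: "('f \<Rightarrow> nat) \<Rightarrow> ('a, 'f) alg \<Rightarrow> ('a \<times> 'a) set set" where
  "K ar A = {\<theta> \<in> Con ar A. \<forall>S \<subseteq> Con ar A. \<theta> \<subseteq> Cg ar A (\<Union>S) \<longrightarrow>
      (\<exists>S'. finite S' \<and> S' \<subseteq> S \<and> \<theta> \<subseteq> Cg ar A (\<Union>S'))}"

definition con_modular :: "('f \<Rightarrow> nat) \<Rightarrow> ('a, 'f) alg \<Rightarrow> bool" where
  "con_modular ar A \<longleftrightarrow> (\<forall>\<alpha>\<in>Con ar A. \<forall>\<beta>\<in>Con ar A. \<forall>\<gamma>\<in>Con ar A.
     \<alpha> \<subseteq> \<gamma> \<longrightarrow> cjoin ar A \<alpha> (\<beta> \<inter> \<gamma>) = cjoin ar A \<alpha> \<beta> \<inter> \<gamma>)"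

text \<open>Congruence modularity and semidegeneracy of V = Mod(Sigma) are tested on
all algebras of V whose carrier is a set of natural numbers (i.e. all countable
algebras of V up to isomorphism).\<close>

definition congruence_modular_variety :: "('f \<Rightarrow> nat) \<Rightarrow> (('f, nat) trm \<times> ('f, nat) trm) set \<Rightarrow> bool" where
  "congruence_modular_variety ar \<Sigma> \<longleftrightarrow>
     (\<forall>B :: (nat, 'f) alg. in_variety ar \<Sigma> B \<longrightarrow> con_modular ar B)"

definition one_element_subalgebra :: "('f \<Rightarrow> nat) \<Rightarrow> ('a, 'f) alg \<Rightarrow> 'a \<Rightarrow> bool" where
  "one_element_subalgebra ar A e \<longleftrightarrow> e \<in> alg_carrier A \<and>
     (\<forall>f. alg_op A f (replicate (ar f) e) = e)"

definition semidegenerate_variety :: "('f \<Rightarrow> nat) \<Rightarrow> (('f, nat) trm \<times> ('f, nat) trm) set \<Rightarrow> bool" where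
  "semidegenerate_variety ar \<Sigma> \<longleftrightarrow>
     (\<forall>B :: (nat, 'f) alg. in_variety ar \<Sigma> B \<and> (\<exists>x\<in>alg_carrier B. \<exists>y\<in>alg_carrier B. x \<noteq> y)
        \<longrightarrow> \<not> (\<exists>e. one_element_subalgebra ar B e))"

section \<open>The (Freese--McKenzie, term condition) commutator\<close>

text \<open>C(alpha,beta;delta): alpha centralizes beta modulo delta. Variable 0 of the
term plays the role of x, the other variables form the tuple y.\<close>
definition centralizes :: "('f \<Rightarrow> nat) \<Rightarrow> ('a, 'f) alg \<Rightarrow> ('a \<times> 'a) set \<Rightarrow> ('a \<times> 'a) set \<Rightarrow> ('a \<times> 'a) set \<Rightarrow> bool" where
  "centralizes ar A \<alpha> \<beta> \<delta> \<longleftrightarrow>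
     (\<forall>t :: ('f, nat) trm. \<forall>a b c d. wf_trm ar t \<and> (a, b) \<in> \<alpha> \<and>
        range c \<subseteq> alg_carrier A \<and> range d \<subseteq> alg_carrier A \<and> (\<forall>i. (c i, d i) \<in> \<beta>) \<and>
        (eval_trm A (c(0 := a)) t, eval_trm A (d(0 := a)) t) \<in> \<delta> \<longrightarrow>
        (eval_trm A (c(0 := b)) t, eval_trm A (d(0 := b)) t) \<in> \<delta>)"

definition comm :: "('f \<Rightarrow> nat) \<Rightarrow> ('a, 'f) alg \<Rightarrow> ('a \<times> 'a) set \<Rightarrow> ('a \<times> 'a) set \<Rightarrow> ('a \<times> 'a) set" where
  "comm ar A \<alpha> \<beta> = Nabla A \<inter> \<Inter>{\<delta> \<in> Con ar A. centralizes ar A \<alpha> \<beta> \<delta>}"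

definition prime_con :: "('f \<Rightarrow> nat) \<Rightarrow> ('a, 'f) alg \<Rightarrow> ('a \<times> 'a) set \<Rightarrow> bool" where
  "prime_con ar A \<phi> \<longleftrightarrow> \<phi> \<in> Con ar A \<and> \<phi> \<noteq> Nabla A \<and>
     (\<forall>\<alpha>\<in>Con ar A. \<forall>\<beta>\<in>Con ar A. comm ar A \<alpha> \<beta> \<subseteq> \<phi> \<longrightarrow> \<alpha> \<subseteq> \<phi> \<or> \<beta> \<subseteq> \<phi>)"

definition Spec :: "('f \<Rightarrow> nat) \<Rightarrow> ('a, 'f) alg \<Rightarrow> ('a \<times> 'a) set set" where
  "Spec ar A = {\<phi>. prime_con ar A \<phi>}"

definition rho :: "('f \<Rightarrow> nat) \<Rightarrow> ('a, 'f) alg \<Rightarrow> ('a \<times> 'a) set \<Rightarrow> ('a \<times> 'a) set" where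
  "rho ar A \<theta> = Nabla A \<inter> \<Inter>{\<phi> \<in> Spec ar A. \<theta> \<subseteq> \<phi>}"

definition V_A :: "('f \<Rightarrow> nat) \<Rightarrow> ('a, 'f) alg \<Rightarrow> ('a \<times> 'a) set \<Rightarrow> ('a \<times> 'a) set set" where
  "V_A ar A \<theta> = {\<phi> \<in> Spec ar A. \<theta> \<subseteq> \<phi>}"

definition D_A :: "('f \<Rightarrow> nat) \<Rightarrow> ('a, 'f) alg \<Rightarrow> ('a \<times> 'a) set \<Rightarrow> ('a \<times> 'a) set set" where
  "D_A ar A \<theta> = Spec ar A - V_A ar A \<theta>"

definition spec_open :: "('f \<Rightarrow> nat) \<Rightarrow> ('a, 'f) alg \<Rightarrow> ('a \<times> 'a) set set set" where
  "spec_open ar A = D_A ar A ` Con ar A"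

definition Clop :: "('f \<Rightarrow> nat) \<Rightarrow> ('a, 'f) alg \<Rightarrow> ('a \<times> 'a) set set set" where
  "Clop ar A = {U \<in> spec_open ar A. Spec ar A - U \<in> spec_open ar A}"

definition BCon :: "('f \<Rightarrow> nat) \<Rightarrow> ('a, 'f) alg \<Rightarrow> ('a \<times> 'a) set set" where
  "BCon ar A = {\<alpha> \<in> Con ar A. \<exists>\<beta>\<in>Con ar A. \<alpha> \<inter> \<beta> = Delta A \<and> cjoin ar A \<alpha> \<beta> = Nabla A}"

definition D_boolean_iso :: "('f \<Rightarrow> nat) \<Rightarrow> ('a, 'f) alg \<Rightarrow> bool" where
  "D_boolean_iso ar A \<longleftrightarrow> bij_betw (D_A ar A) (BCon ar A) (Clop ar A) \<and>
     (\<forall>\<alpha>\<in>BCon ar A. \<forall>\<beta>\<in>BCon ar A.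
        D_A ar A (\<alpha> \<inter> \<beta>) = D_A ar A \<alpha> \<inter> D_A ar A \<beta> \<and>
        D_A ar A (cjoin ar A \<alpha> \<beta>) = D_A ar A \<alpha> \<union> D_A ar A \<beta>) \<and>
     D_A ar A (Delta A) = {} \<and> D_A ar A (Nabla A) = Spec ar A"

definition retic_rel :: "('f \<Rightarrow> nat) \<Rightarrow> ('a, 'f) alg \<Rightarrow> (('a \<times> 'a) set \<times> ('a \<times> 'a) set) set" where
  "retic_rel ar A = {(\<alpha>, \<beta>). \<alpha> \<in> K ar A \<and> \<beta> \<in> K ar A \<and> rho ar A \<alpha> = rho ar A \<beta>}"

definition L :: "('f \<Rightarrow> nat) \<Rightarrow> ('a, 'f) alg \<Rightarrow> ('a \<times> 'a) set set set" where
  "L ar A = K ar A // retic_rel ar A"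

definition lam :: "('f \<Rightarrow> nat) \<Rightarrow> ('a, 'f) alg \<Rightarrow> ('a \<times> 'a) set \<Rightarrow> ('a \<times> 'a) set set" where
  "lam ar A \<alpha> = retic_rel ar A `` {\<alpha>}"

text \<open>In L(A): lam a \<and> lam b = lam [a,b], lam a \<or> lam b = lam (a \<or> b),
0 = lam Delta, 1 = lam Nabla. B(L(A)) = complemented elements of L(A).\<close>
definition BL :: "('f \<Rightarrow> nat) \<Rightarrow> ('a, 'f) alg \<Rightarrow> ('a \<times> 'a) set set set" where
  "BL ar A = {x \<in> L ar A. \<exists>\<alpha>\<in>K ar A. \<exists>\<beta>\<in>K ar A. x = lam ar A \<alpha> \<and>
      lam ar A (comm ar A \<alpha> \<beta>) = lam ar A (Delta A) \<and>
      lam ar A (cjoin ar A \<alpha> \<beta>) = lam ar A (Nabla A)}"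

definition preserves_boolean_center :: "('f \<Rightarrow> nat) \<Rightarrow> ('a, 'f) alg \<Rightarrow> bool" where
  "preserves_boolean_center ar A \<longleftrightarrow> (\<forall>x\<in>BL ar A. \<exists>\<alpha>\<in>BCon ar A. lam ar A \<alpha> = x)"

end

theory Submission
  imports Defs "HOL-Library.Countable_Set"
begin

text \<open>Let \<open>\<lambda>(\<alpha>)\<close> be complemented in \<open>L(A)\<close> with complement \<open>\<lambda>(\<beta>)\<close>. Then every prime contains
\<open>[\<alpha>, \<beta>]\<close>, hence \<open>\<alpha>\<close> or \<open>\<beta>\<close>, and no prime contains \<open>\<alpha> \<squnion> \<beta>\<close>; so \<open>V(\<alpha>)\<close> and \<open>V(\<beta>)\<close>
partition \<open>Spec(A)\<close> and \<open>D(\<alpha>)\<close> is clopen. The Boolean isomorphism gives \<open>\<gamma> \<in> B(Con(A))\<close>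
with \<open>D(\<gamma>) = D(\<alpha>)\<close>, i.e. \<open>\<rho>(\<gamma>) = \<rho>(\<alpha>)\<close>, and it remains to see that \<open>\<gamma>\<close> is compact.
As \<open>\<nabla> = \<gamma> \<squnion> \<delta>\<close> is compact, \<open>\<nabla> = \<gamma>' \<squnion> \<delta>\<close> for a finitely generated \<open>\<gamma>' \<le> \<gamma>\<close>, and
modularity gives \<open>\<gamma> = \<gamma>' \<squnion> (\<delta> \<sqinter> \<gamma>) = \<gamma>'\<close>.

Congruence modularity of the variety is only assumed for algebras carried by \<open>\<nat>\<close>. To
get the modular law in \<open>Con(A)\<close>, note that a pair in \<open>(\<alpha> \<squnion> \<beta>) \<sqinter> \<gamma>\<close> is connected by a
finite \<open>\<alpha> \<union> \<beta>\<close>-chain; the subalgebra generated by this chain is countable (the signature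
is finite), its copy on \<open>\<nat>\<close> is modular, and restricting congruences to it commutes
with meets and maps joins into joins.\<close>

section \<open>Congruences and their joins\<close>

lemma Con_subset_Nabla: "\<theta> \<in> Con ar A \<Longrightarrow> \<theta> \<subseteq> Nabla A"
  by (auto simp: Con_def Nabla_def equiv_def)

lemma Con_refl: "\<theta> \<in> Con ar A \<Longrightarrow> a \<in> alg_carrier A \<Longrightarrow> (a, a) \<in> \<theta>"
  by (auto simp: Con_def equiv_def refl_on_def)

lemma Con_sym: "\<theta> \<in> Con ar A \<Longrightarrow> (a, b) \<in> \<theta> \<Longrightarrow> (b, a) \<in> \<theta>"
  by (auto simp: Con_def equiv_def sym_def)

lemma Con_trans: "\<theta> \<in> Con ar A \<Longrightarrow> (a, b) \<in> \<theta> \<Longrightarrow> (b, c) \<in> \<theta> \<Longrightarrow> (a, c) \<in> \<theta>"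
  unfolding Con_def equiv_def trans_def by blast

lemma Con_compat:
  "\<theta> \<in> Con ar A \<Longrightarrow> length xs = ar f \<Longrightarrow> length ys = ar f \<Longrightarrow>
   (\<And>i. i < ar f \<Longrightarrow> (xs ! i, ys ! i) \<in> \<theta>) \<Longrightarrow> (alg_op A f xs, alg_op A f ys) \<in> \<theta>"
  unfolding Con_def by blast

lemma ConI:
  assumes "\<theta> \<subseteq> Nabla A" "\<And>a. a \<in> alg_carrier A \<Longrightarrow> (a, a) \<in> \<theta>"
    "\<And>a b. (a, b) \<in> \<theta> \<Longrightarrow> (b, a) \<in> \<theta>"
    "\<And>a b c. (a, b) \<in> \<theta> \<Longrightarrow> (b, c) \<in> \<theta> \<Longrightarrow> (a, c) \<in> \<theta>"
    "\<And>f xs ys. length xs = ar f \<Longrightarrow> length ys = ar f \<Longrightarrow>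
       \<forall>i<ar f. (xs ! i, ys ! i) \<in> \<theta> \<Longrightarrow> (alg_op A f xs, alg_op A f ys) \<in> \<theta>"
  shows "\<theta> \<in> Con ar A"
  using assms unfolding Con_def equiv_def Nabla_def refl_on_def sym_def trans_def by blast

lemma Con_rtrancl_subset:
  assumes "\<theta> \<in> Con ar A" "R \<subseteq> \<theta>" "a \<in> alg_carrier A" "(a, b) \<in> R\<^sup>*"
  shows "(a, b) \<in> \<theta>"
  using assms(4)
proof induction
  case base
  show ?case by (rule Con_refl[OF assms(1,3)])
next
  case (step b c)
  then show ?case using assms(2) by (blast intro: Con_trans[OF assms(1)])
qed

lemma is_algebra_closed:
  "is_algebra ar A \<Longrightarrow> length xs = ar f \<Longrightarrow> set xs \<subseteq> alg_carrier A \<Longrightarrow>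
   alg_op A f xs \<in> alg_carrier A"
  unfolding is_algebra_def by blast

lemma set_subset_carrier_if_related:
  assumes "length xs = n" "length ys = n" "\<forall>i<n. (xs ! i, ys ! i) \<in> Nabla A"
  shows "set xs \<subseteq> alg_carrier A" "set ys \<subseteq> alg_carrier A"
  using assms by (auto simp: Nabla_def in_set_conv_nth)

lemma Nabla_Inter_Con:
  assumes alg: "is_algebra ar A" and S: "S \<subseteq> Con ar A"
  shows "Nabla A \<inter> \<Inter>S \<in> Con ar A"
proof (rule ConI)
  fix f xs ys assume l: "length xs = ar f" "length ys = ar f"
    and r: "\<forall>i<ar f. (xs ! i, ys ! i) \<in> Nabla A \<inter> \<Inter>S"
  have "set xs \<subseteq> alg_carrier A" "set ys \<subseteq> alg_carrier A"
    using set_subset_carrier_if_related[OF l] r by blast+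
  then have "(alg_op A f xs, alg_op A f ys) \<in> Nabla A"
    using is_algebra_closed[OF alg] l by (simp add: Nabla_def)
  moreover have "(alg_op A f xs, alg_op A f ys) \<in> \<theta>" if "\<theta> \<in> S" for \<theta>
    using Con_compat[of \<theta> ar A, OF _ l] S that r by blast
  ultimately show "(alg_op A f xs, alg_op A f ys) \<in> Nabla A \<inter> \<Inter>S" by blast
next
  fix a assume "a \<in> alg_carrier A"
  then show "(a, a) \<in> Nabla A \<inter> \<Inter>S" using Con_refl[of _ ar A a] S by (auto simp: Nabla_def)
next
  fix a b assume "(a, b) \<in> Nabla A \<inter> \<Inter>S"
  then show "(b, a) \<in> Nabla A \<inter> \<Inter>S" using Con_sym[of _ ar A a b] S by (auto simp: Nabla_def)
next
  fix a b c assume "(a, b) \<in> Nabla A \<inter> \<Inter>S" "(b, c) \<in> Nabla A \<inter> \<Inter>S"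
  then show "(a, c) \<in> Nabla A \<inter> \<Inter>S" using Con_trans[of _ ar A a b c] S by (auto simp: Nabla_def)
qed blast

lemma Cg_Con: "is_algebra ar A \<Longrightarrow> Cg ar A S \<in> Con ar A"
  unfolding Cg_def by (rule Nabla_Inter_Con) auto

lemma Cg_least: "\<theta> \<in> Con ar A \<Longrightarrow> S \<subseteq> \<theta> \<Longrightarrow> Cg ar A S \<subseteq> \<theta>"
  unfolding Cg_def by blast

lemma Cg_superset: "S \<subseteq> Nabla A \<Longrightarrow> S \<subseteq> Cg ar A S"
  unfolding Cg_def by blast

lemma Cg_mono: "S \<subseteq> T \<Longrightarrow> Cg ar A S \<subseteq> Cg ar A T"
  unfolding Cg_def by blast

lemma Cg_subset_Nabla: "Cg ar A S \<subseteq> Nabla A"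
  unfolding Cg_def by blast

lemma Cg_Con_eq: "\<theta> \<in> Con ar A \<Longrightarrow> Cg ar A \<theta> = \<theta>"
  by (meson Cg_least Cg_superset Con_subset_Nabla order_refl subset_antisym)

lemma Con_Int:
  assumes alg: "is_algebra ar A" and \<alpha>: "\<alpha> \<in> Con ar A" and \<beta>: "\<beta> \<in> Con ar A"
  shows "\<alpha> \<inter> \<beta> \<in> Con ar A"
proof -
  have "Nabla A \<inter> \<Inter>{\<alpha>, \<beta>} = \<alpha> \<inter> \<beta>" using Con_subset_Nabla[OF \<alpha>] by auto
  then show ?thesis using Nabla_Inter_Con[OF alg, of "{\<alpha>, \<beta>}"] \<alpha> \<beta> by simp
qed

lemma cjoin_Int_subset:
  assumes "\<gamma> \<in> Con ar A" "\<alpha> \<subseteq> \<gamma>"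
  shows "cjoin ar A \<alpha> (\<beta> \<inter> \<gamma>) \<subseteq> cjoin ar A \<alpha> \<beta> \<inter> \<gamma>"
proof -
  have "Cg ar A (\<alpha> \<union> \<beta> \<inter> \<gamma>) \<subseteq> Cg ar A (\<alpha> \<union> \<beta>)" by (rule Cg_mono) blast
  moreover have "Cg ar A (\<alpha> \<union> \<beta> \<inter> \<gamma>) \<subseteq> \<gamma>" by (rule Cg_least) (use assms in blast)+
  ultimately show ?thesis unfolding cjoin_def by blast
qed

lemma rtrancl_map:
  "(\<And>a b. (a, b) \<in> R \<Longrightarrow> (f a, f b) \<in> S) \<Longrightarrow> (x, y) \<in> R\<^sup>* \<Longrightarrow> (f x, f y) \<in> S\<^sup>*"
  by (erule rtrancl_induct) (auto intro: rtrancl_into_rtrancl)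

lemma rtrancl_finite_subset:
  "(a, b) \<in> R\<^sup>* \<Longrightarrow> \<exists>R'. finite R' \<and> R' \<subseteq> R \<and> (a, b) \<in> R'\<^sup>*"
proof (induction rule: rtrancl_induct)
  case (step b c)
  then obtain R' where R': "finite R'" "R' \<subseteq> R" "(a, b) \<in> R'\<^sup>*" by blast
  have "(a, b) \<in> (insert (b, c) R')\<^sup>*"
    using R'(3) rtrancl_mono[of R' "insert (b, c) R'"] by blast
  then have "(a, c) \<in> (insert (b, c) R')\<^sup>*" by (rule rtrancl_into_rtrancl) simp
  moreover have "finite (insert (b, c) R')" "insert (b, c) R' \<subseteq> R" using R' step(2) by auto
  ultimately show ?case by blast
qed (intro exI[of _ "{}"], simp)

lemma rtrancl_compat_list:
  assumes single: "\<And>a b zs k. (a, b) \<in> R \<Longrightarrow> length zs = n \<Longrightarrow> set zs \<subseteq> C \<Longrightarrow> k < n \<Longrightarrow>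
        (F (zs[k := a]), F (zs[k := b])) \<in> R\<^sup>*"
    and len: "length xs = n" "length ys = n"
    and rel: "\<forall>i<n. (xs ! i, ys ! i) \<in> R\<^sup>*"
    and C: "set xs \<subseteq> C" "set ys \<subseteq> C"
  shows "(F xs, F ys) \<in> R\<^sup>*"
proof -
  have "k \<le> n \<Longrightarrow> (F xs, F (take k ys @ drop k xs)) \<in> R\<^sup>*" for k
  proof (induction k)
    case (Suc k)
    then have kn: "k < n" by simp
    define zs where "zs = take k ys @ drop k xs"
    have len_zs: "length zs = n" and C_zs: "set zs \<subseteq> C"
      unfolding zs_def using len C set_take_subset[of k ys] set_drop_subset[of k xs] by auto
    have zs_k: "zs[k := xs ! k] = zs" and zs_Suc: "zs[k := ys ! k] = take (Suc k) ys @ drop (Suc k) xs"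
      unfolding zs_def using kn len
      by (simp_all add: list_update_append take_Suc_conv_app_nth Cons_nth_drop_Suc[symmetric])
    have "(F (zs[k := xs ! k]), F (zs[k := c])) \<in> R\<^sup>*" if "(xs ! k, c) \<in> R\<^sup>*" for c
      using that
    proof induction
      case (step b c)
      have "(F (zs[k := b]), F (zs[k := c])) \<in> R\<^sup>*" by (rule single[OF step.hyps(2) len_zs C_zs kn])
      with step.IH show ?case by (rule rtrancl_trans)
    qed simp
    from this[of "ys ! k"] have "(F zs, F (take (Suc k) ys @ drop (Suc k) xs)) \<in> R\<^sup>*"
      using rel kn unfolding zs_k zs_Suc by blast
    moreover have "(F xs, F zs) \<in> R\<^sup>*" using Suc.IH kn unfolding zs_def by simp
    ultimately show ?case by (rule rtrancl_trans[rotated])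
  qed simp
  from this[of n] show ?thesis using len by simp
qed

lemma Cg_Union_subset_rtrancl:
  assumes alg: "is_algebra ar A" and S: "S \<subseteq> Con ar A"
  shows "Cg ar A (\<Union>S) \<subseteq> (\<Union>S)\<^sup>*"
proof -
  let ?R = "\<Union>S" and ?C = "alg_carrier A"
  have translate: "(alg_op A f (zs[k := a]), alg_op A f (zs[k := b])) \<in> ?R\<^sup>*"
    if ab: "(a, b) \<in> ?R" and zs: "length zs = ar f" "set zs \<subseteq> ?C" "k < ar f" for a b zs k f
  proof -
    obtain \<theta> where \<theta>: "\<theta> \<in> S" "(a, b) \<in> \<theta>" using ab by blast
    then have \<theta>_Con: "\<theta> \<in> Con ar A" using S by blast
    have "(alg_op A f (zs[k := a]), alg_op A f (zs[k := b])) \<in> \<theta>"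
    proof (rule Con_compat[OF \<theta>_Con])
      fix i assume "i < ar f"
      then show "(zs[k := a] ! i, zs[k := b] ! i) \<in> \<theta>"
        using \<theta>(2) zs Con_refl[OF \<theta>_Con] by (cases "i = k") (auto simp: nth_mem subsetD)
    qed (use zs in simp_all)
    then show ?thesis using \<theta>(1) by blast
  qed
  define T where "T = Nabla A \<inter> ?R\<^sup>*"
  have "T \<in> Con ar A"
  proof (rule ConI)
    fix a b assume "(a, b) \<in> T"
    moreover have "sym (?R\<^sup>*)"
      using Con_sym[OF subsetD[OF S]] by (intro sym_rtrancl) (unfold sym_def, blast)
    ultimately show "(b, a) \<in> T" unfolding T_def Nabla_def by (auto dest: symD)
  next
    fix f xs ys assume len: "length xs = ar f" "length ys = ar f"
      and rel: "\<forall>i<ar f. (xs ! i, ys ! i) \<in> T"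
    have C: "set xs \<subseteq> ?C" "set ys \<subseteq> ?C"
      using set_subset_carrier_if_related[OF len] rel unfolding T_def by blast+
    have "(alg_op A f xs, alg_op A f ys) \<in> ?R\<^sup>*"
      by (rule rtrancl_compat_list[OF _ len _ C]) (use translate rel T_def in auto)
    moreover have "(alg_op A f xs, alg_op A f ys) \<in> Nabla A"
      using C len is_algebra_closed[OF alg] by (auto simp: Nabla_def)
    ultimately show "(alg_op A f xs, alg_op A f ys) \<in> T" unfolding T_def by blast
  qed (auto simp: T_def Nabla_def)
  moreover have "?R \<subseteq> T" unfolding T_def using S Con_subset_Nabla by blast
  ultimately show ?thesis unfolding T_def by (meson Cg_least le_inf_iff)
qed

lemma Cg_Union_finite:
  assumes alg: "is_algebra ar A" and S: "S \<subseteq> Con ar A" and p: "p \<in> Cg ar A (\<Union>S)"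
  shows "\<exists>S'. finite S' \<and> S' \<subseteq> S \<and> p \<in> Cg ar A (\<Union>S')"
proof -
  obtain a b where p_ab: "p = (a, b)" by (cases p)
  then have "(a, b) \<in> (\<Union>S)\<^sup>*" using Cg_Union_subset_rtrancl[OF alg S] p by blast
  from rtrancl_finite_subset[OF this]
  obtain R where R: "finite R" "R \<subseteq> \<Union>S" "(a, b) \<in> R\<^sup>*" by blast
  then have "\<forall>q\<in>R. \<exists>\<theta>. \<theta> \<in> S \<and> q \<in> \<theta>" by blast
  then obtain sel where sel: "\<forall>q\<in>R. sel q \<in> S \<and> q \<in> sel q" using bchoice by meson
  have "\<Union>(sel ` R) \<subseteq> Nabla A" using sel S Con_subset_Nabla by blast
  then have "R \<subseteq> Cg ar A (\<Union>(sel ` R))" using sel Cg_superset[of "\<Union>(sel ` R)" A ar] by blast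
  moreover have "(a, b) \<in> Nabla A" using p p_ab Cg_subset_Nabla by blast
  then have "a \<in> alg_carrier A" by (simp add: Nabla_def)
  ultimately have "(a, b) \<in> Cg ar A (\<Union>(sel ` R))"
    using Con_rtrancl_subset[OF Cg_Con[OF alg] _ _ R(3)] by blast
  moreover have "finite (sel ` R)" "sel ` R \<subseteq> S" using R(1) sel by auto
  ultimately show ?thesis using p_ab by blast
qed

section \<open>Compact congruences\<close>

lemma K_Con: "\<theta> \<in> K ar A \<Longrightarrow> \<theta> \<in> Con ar A"
  unfolding K_def by blast

lemma K_compactD:
  "\<theta> \<in> K ar A \<Longrightarrow> S \<subseteq> Con ar A \<Longrightarrow> \<theta> \<subseteq> Cg ar A (\<Union>S) \<Longrightarrow>
   \<exists>S'. finite S' \<and> S' \<subseteq> S \<and> \<theta> \<subseteq> Cg ar A (\<Union>S')"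
  unfolding K_def by blast

lemma finite_Cg_K:
  assumes alg: "is_algebra ar A" and P: "finite P" "P \<subseteq> Nabla A"
  shows "Cg ar A P \<in> K ar A"
  unfolding K_def
proof (intro CollectI conjI allI impI)
  show "Cg ar A P \<in> Con ar A" by (rule Cg_Con[OF alg])
  fix S assume S: "S \<subseteq> Con ar A" "Cg ar A P \<subseteq> Cg ar A (\<Union>S)"
  have "\<forall>p\<in>P. \<exists>S'. finite S' \<and> S' \<subseteq> S \<and> p \<in> Cg ar A (\<Union>S')"
    using Cg_Union_finite[OF alg S(1)] S(2) Cg_superset[OF P(2)] by blast
  then obtain sel where sel: "\<forall>p\<in>P. finite (sel p) \<and> sel p \<subseteq> S \<and> p \<in> Cg ar A (\<Union>(sel p))"
    by metis
  have "P \<subseteq> Cg ar A (\<Union>(\<Union>(sel ` P)))"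
  proof
    fix p assume "p \<in> P"
    then have "Cg ar A (\<Union>(sel p)) \<subseteq> Cg ar A (\<Union>(\<Union>(sel ` P)))" by (intro Cg_mono) blast
    then show "p \<in> Cg ar A (\<Union>(\<Union>(sel ` P)))" using sel \<open>p \<in> P\<close> by blast
  qed
  then have "Cg ar A P \<subseteq> Cg ar A (\<Union>(\<Union>(sel ` P)))" by (rule Cg_least[OF Cg_Con[OF alg]])
  moreover have "finite (\<Union>(sel ` P))" "\<Union>(sel ` P) \<subseteq> S" using sel P by auto
  ultimately show "\<exists>S'. finite S' \<and> S' \<subseteq> S \<and> Cg ar A P \<subseteq> Cg ar A (\<Union>S')" by blast
qed

lemma cjoin_K:
  assumes alg: "is_algebra ar A" and K: "\<alpha> \<in> K ar A" "\<beta> \<in> K ar A"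
  shows "cjoin ar A \<alpha> \<beta> \<in> K ar A"
  unfolding K_def
proof (intro CollectI conjI allI impI)
  show "cjoin ar A \<alpha> \<beta> \<in> Con ar A" unfolding cjoin_def by (rule Cg_Con[OF alg])
  fix S assume S: "S \<subseteq> Con ar A" "cjoin ar A \<alpha> \<beta> \<subseteq> Cg ar A (\<Union>S)"
  have "\<alpha> \<union> \<beta> \<subseteq> Nabla A" using Con_subset_Nabla[OF K_Con[OF K(1)]] Con_subset_Nabla[OF K_Con[OF K(2)]] by blast
  then have "\<alpha> \<subseteq> Cg ar A (\<Union>S)" "\<beta> \<subseteq> Cg ar A (\<Union>S)"
    using S(2) Cg_superset[of "\<alpha> \<union> \<beta>" A ar] unfolding cjoin_def by auto
  then obtain S1 S2 where S12: "finite S1" "S1 \<subseteq> S" "\<alpha> \<subseteq> Cg ar A (\<Union>S1)"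
    "finite S2" "S2 \<subseteq> S" "\<beta> \<subseteq> Cg ar A (\<Union>S2)"
    using K_compactD[OF K(1) S(1)] K_compactD[OF K(2) S(1)] by blast
  then have "\<alpha> \<union> \<beta> \<subseteq> Cg ar A (\<Union>(S1 \<union> S2))"
    using Cg_mono[of "\<Union>S1" "\<Union>(S1 \<union> S2)" ar A] Cg_mono[of "\<Union>S2" "\<Union>(S1 \<union> S2)" ar A] by blast
  then have "cjoin ar A \<alpha> \<beta> \<subseteq> Cg ar A (\<Union>(S1 \<union> S2))"
    unfolding cjoin_def by (rule Cg_least[OF Cg_Con[OF alg]])
  then show "\<exists>S'. finite S' \<and> S' \<subseteq> S \<and> cjoin ar A \<alpha> \<beta> \<subseteq> Cg ar A (\<Union>S')"
    using S12 by (intro exI[of _ "S1 \<union> S2"]) auto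
qed

section \<open>Countable subalgebras transported to the naturals\<close>

fun gen_stage :: "('f \<Rightarrow> nat) \<Rightarrow> ('a, 'f) alg \<Rightarrow> 'a set \<Rightarrow> nat \<Rightarrow> 'a set" where
  "gen_stage ar A X 0 = X"
| "gen_stage ar A X (Suc n) = gen_stage ar A X n \<union>
     (\<Union>f. alg_op A f ` {xs. set xs \<subseteq> gen_stage ar A X n \<and> length xs = ar f})"

definition Sg :: "('f \<Rightarrow> nat) \<Rightarrow> ('a, 'f) alg \<Rightarrow> 'a set \<Rightarrow> 'a set" where
  "Sg ar A X = (\<Union>n. gen_stage ar A X n)"

lemma gen_stage_mono: "m \<le> n \<Longrightarrow> gen_stage ar A X m \<subseteq> gen_stage ar A X n"
  by (rule lift_Suc_mono_le[of "gen_stage ar A X"]) auto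

lemma subset_Sg: "X \<subseteq> Sg ar A X"
  unfolding Sg_def using UN_upper[of 0 UNIV "gen_stage ar A X"] by simp

lemma finite_subset_gen_stage:
  assumes "finite F" "F \<subseteq> Sg ar A X"
  shows "\<exists>n. F \<subseteq> gen_stage ar A X n"
  using assms
proof (induction rule: finite_induct)
  case (insert x F)
  then obtain m n where "F \<subseteq> gen_stage ar A X m" "x \<in> gen_stage ar A X n"
    unfolding Sg_def by blast
  then have "insert x F \<subseteq> gen_stage ar A X (max m n)"
    using gen_stage_mono[of m "max m n" ar A X] gen_stage_mono[of n "max m n" ar A X] by auto
  then show ?case by blast
qed simp

lemma Sg_closed:
  assumes "length xs = ar f" "set xs \<subseteq> Sg ar A X"
  shows "alg_op A f xs \<in> Sg ar A X"
proof -
  obtain n where "set xs \<subseteq> gen_stage ar A X n"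
    using finite_subset_gen_stage[OF finite_set assms(2)] by blast
  then have "alg_op A f xs \<in> gen_stage ar A X (Suc n)" using assms(1) by auto
  then show ?thesis unfolding Sg_def by blast
qed

lemma Sg_subset_carrier:
  assumes alg: "is_algebra ar A" and X: "X \<subseteq> alg_carrier A"
  shows "Sg ar A X \<subseteq> alg_carrier A"
proof -
  have "gen_stage ar A X n \<subseteq> alg_carrier A" for n
    by (induction n) (use X is_algebra_closed[OF alg] in auto)
  then show ?thesis unfolding Sg_def by blast
qed

lemma countable_Sg:
  assumes fin: "finite (UNIV :: 'f set)" and X: "countable X"
  shows "countable (Sg ar (A :: ('a, 'f) alg) X)"
proof -
  have "countable (gen_stage ar A X n)" for n
  proof (induction n)
    case (Suc n)
    have "countable {xs. set xs \<subseteq> gen_stage ar A X n \<and> length xs = ar f}" for f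
      by (rule countable_subset[of _ "lists (gen_stage ar A X n)"]) (use Suc in auto)
    then show ?case using Suc countable_finite[OF fin] by (auto intro!: countable_UN)
  qed (simp add: X)
  then show ?thesis unfolding Sg_def by auto
qed

definition nat_copy :: "'a set \<Rightarrow> ('a, 'f) alg \<Rightarrow> (nat, 'f) alg" where
  "nat_copy B A = \<lparr>alg_carrier = to_nat_on B ` B,
     alg_op = (\<lambda>f xs. to_nat_on B (alg_op A f (map (from_nat_into B) xs)))\<rparr>"

definition nat_copy_rel :: "'a set \<Rightarrow> ('a \<times> 'a) set \<Rightarrow> (nat \<times> nat) set" where
  "nat_copy_rel B \<theta> = map_prod (to_nat_on B) (to_nat_on B) ` (\<theta> \<inter> B \<times> B)"

lemma nat_copy_rel_mono: "\<theta> \<subseteq> \<eta> \<Longrightarrow> nat_copy_rel B \<theta> \<subseteq> nat_copy_rel B \<eta>"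
  unfolding nat_copy_rel_def by blast

locale countable_subuniverse =
  fixes ar :: "'f \<Rightarrow> nat" and A :: "('a, 'f) alg" and B :: "'a set"
  assumes countable: "countable B" and nonempty: "B \<noteq> {}"
    and subset_carrier: "B \<subseteq> alg_carrier A"
    and closed: "\<And>f xs. length xs = ar f \<Longrightarrow> set xs \<subseteq> B \<Longrightarrow> alg_op A f xs \<in> B"
begin

abbreviation enc :: "'a \<Rightarrow> nat" where "enc \<equiv> to_nat_on B"
abbreviation dec :: "nat \<Rightarrow> 'a" where "dec \<equiv> from_nat_into B"

lemma nat_copy_simps [simp]:
  "alg_carrier (nat_copy B A) = enc ` B"
  "alg_op (nat_copy B A) f xs = enc (alg_op A f (map dec xs))"
  by (simp_all add: nat_copy_def)

lemma dec_enc [simp]: "a \<in> B \<Longrightarrow> dec (enc a) = a"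
  using countable by simp

lemma dec_in_B: "u \<in> enc ` B \<Longrightarrow> dec u \<in> B"
  by auto

lemma enc_in_nat_copy_rel_iff:
  assumes "a \<in> B" "b \<in> B"
  shows "(enc a, enc b) \<in> nat_copy_rel B \<theta> \<longleftrightarrow> (a, b) \<in> \<theta>"
  using assms inj_on_to_nat_on[OF countable] unfolding nat_copy_rel_def
  by (auto dest: inj_onD)

lemma nat_copy_relD:
  "(u, v) \<in> nat_copy_rel B \<theta> \<Longrightarrow> u \<in> enc ` B \<and> v \<in> enc ` B \<and> (dec u, dec v) \<in> \<theta>"
  unfolding nat_copy_rel_def by auto

lemma nat_copy_rel_Int: "nat_copy_rel B (\<theta> \<inter> \<eta>) = nat_copy_rel B \<theta> \<inter> nat_copy_rel B \<eta>"
  using inj_on_to_nat_on[OF countable] unfolding nat_copy_rel_def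
  by (auto simp: inj_on_eq_iff)

lemma dec_list_in_B: "set xs \<subseteq> enc ` B \<Longrightarrow> set (map dec xs) \<subseteq> B"
  by auto

lemma is_algebra_nat_copy: "is_algebra ar (nat_copy B A)"
  unfolding is_algebra_def using nonempty closed dec_list_in_B by auto

lemma eval_nat_copy:
  assumes v: "range v \<subseteq> enc ` B"
  shows "wf_trm ar t \<Longrightarrow>
    eval_trm A (\<lambda>x. dec (v x)) t \<in> B \<and> eval_trm (nat_copy B A) v t = enc (eval_trm A (\<lambda>x. dec (v x)) t)"
proof (induction t)
  case (Var x)
  have "v x \<in> enc ` B" using v by blast
  then show ?case by auto
next
  case (Fn f ts)
  let ?e = "eval_trm A (\<lambda>x. dec (v x))" and ?e' = "eval_trm (nat_copy B A) v"
  have IH: "?e t \<in> B \<and> ?e' t = enc (?e t)" if "t \<in> set ts" for t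
    using Fn that by simp
  then have dec_map: "map dec (map ?e' ts) = map ?e ts" by simp
  have "alg_op A f (map ?e ts) \<in> B" using IH Fn.prems by (intro closed) auto
  moreover have "?e (Fn f ts) = alg_op A f (map ?e ts)"
    and "?e' (Fn f ts) = enc (alg_op A f (map dec (map ?e' ts)))" by simp_all
  ultimately show ?case unfolding dec_map by simp
qed

lemma in_variety_nat_copy:
  assumes var: "in_variety ar \<Sigma> A" and wf: "wf_identities ar \<Sigma>"
  shows "in_variety ar \<Sigma> (nat_copy B A)"
  unfolding in_variety_def
proof (intro conjI ballI is_algebra_nat_copy)
  fix e assume e: "e \<in> \<Sigma>"
  have A_e: "satisfies A e" using var e unfolding in_variety_def by blast
  have wf_e: "wf_trm ar (fst e)" "wf_trm ar (snd e)" using wf e unfolding wf_identities_def by auto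
  show "satisfies (nat_copy B A) e"
    unfolding satisfies_def
  proof (intro allI impI)
    fix v :: "nat \<Rightarrow> nat" assume "range v \<subseteq> alg_carrier (nat_copy B A)"
    then have v: "range v \<subseteq> enc ` B" by simp
    then have "range (\<lambda>x. dec (v x)) \<subseteq> B" by (auto intro!: dec_in_B)
    then have "range (\<lambda>x. dec (v x)) \<subseteq> alg_carrier A" using subset_carrier by blast
    then have "eval_trm A (\<lambda>x. dec (v x)) (fst e) = eval_trm A (\<lambda>x. dec (v x)) (snd e)"
      using A_e unfolding satisfies_def by blast
    then show "eval_trm (nat_copy B A) v (fst e) = eval_trm (nat_copy B A) v (snd e)"
      using eval_nat_copy[OF v wf_e(1)] eval_nat_copy[OF v wf_e(2)] by simp
  qed
qed

lemma nat_copy_rel_Con: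
  assumes \<theta>: "\<theta> \<in> Con ar A"
  shows "nat_copy_rel B \<theta> \<in> Con ar (nat_copy B A)"
proof (rule ConI)
  show "nat_copy_rel B \<theta> \<subseteq> Nabla (nat_copy B A)"
    unfolding nat_copy_rel_def Nabla_def by auto
next
  fix u assume "u \<in> alg_carrier (nat_copy B A)"
  then obtain a where a: "a \<in> B" "u = enc a" by auto
  then show "(u, u) \<in> nat_copy_rel B \<theta>"
    using Con_refl[OF \<theta>] subset_carrier enc_in_nat_copy_rel_iff by blast
next
  fix u v assume "(u, v) \<in> nat_copy_rel B \<theta>"
  then show "(v, u) \<in> nat_copy_rel B \<theta>"
    unfolding nat_copy_rel_def using Con_sym[OF \<theta>] by auto
next
  fix u v w assume uv: "(u, v) \<in> nat_copy_rel B \<theta>" and vw: "(v, w) \<in> nat_copy_rel B \<theta>"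
  then have "(dec u, dec w) \<in> \<theta>" using nat_copy_relD Con_trans[OF \<theta>] by blast
  moreover have "u \<in> enc ` B" "w \<in> enc ` B" using uv vw nat_copy_relD by blast+
  ultimately show "(u, w) \<in> nat_copy_rel B \<theta>"
    using enc_in_nat_copy_rel_iff[OF dec_in_B dec_in_B] by fastforce
next
  fix f xs ys assume len: "length xs = ar f" "length ys = ar f"
    and rel: "\<forall>i<ar f. (xs ! i, ys ! i) \<in> nat_copy_rel B \<theta>"
  have "xs ! i \<in> enc ` B \<and> ys ! i \<in> enc ` B" if "i < ar f" for i
    using rel that nat_copy_relD by blast
  then have "set xs \<subseteq> enc ` B" "set ys \<subseteq> enc ` B"
    using len by (auto simp: in_set_conv_nth)
  then have "alg_op A f (map dec xs) \<in> B" "alg_op A f (map dec ys) \<in> B"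
    using closed dec_list_in_B len by simp_all
  moreover have "(alg_op A f (map dec xs), alg_op A f (map dec ys)) \<in> \<theta>"
    by (rule Con_compat[OF \<theta>]) (use len rel nat_copy_relD in auto)
  ultimately show "(alg_op (nat_copy B A) f xs, alg_op (nat_copy B A) f ys) \<in> nat_copy_rel B \<theta>"
    using enc_in_nat_copy_rel_iff by simp
qed

lemma cjoin_nat_copy_rel_subset:
  assumes alg: "is_algebra ar A" and \<alpha>: "\<alpha> \<in> Con ar A" and \<beta>: "\<beta> \<in> Con ar A"
  shows "cjoin ar (nat_copy B A) (nat_copy_rel B \<alpha>) (nat_copy_rel B \<beta>)
    \<subseteq> nat_copy_rel B (cjoin ar A \<alpha> \<beta>)"
  unfolding cjoin_def
proof (rule Cg_least)
  show "nat_copy_rel B (Cg ar A (\<alpha> \<union> \<beta>)) \<in> Con ar (nat_copy B A)"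
    by (rule nat_copy_rel_Con[OF Cg_Con[OF alg]])
  have "\<alpha> \<union> \<beta> \<subseteq> Cg ar A (\<alpha> \<union> \<beta>)"
    using Con_subset_Nabla[OF \<alpha>] Con_subset_Nabla[OF \<beta>] by (intro Cg_superset) blast
  then show "nat_copy_rel B \<alpha> \<union> nat_copy_rel B \<beta> \<subseteq> nat_copy_rel B (Cg ar A (\<alpha> \<union> \<beta>))"
    using nat_copy_rel_mono[of _ "Cg ar A (\<alpha> \<union> \<beta>)" B] by blast
qed

lemma enc_chain_in_cjoin_nat_copy:
  assumes \<alpha>: "\<alpha> \<in> Con ar A" and \<beta>: "\<beta> \<in> Con ar A"
    and x: "x \<in> B" and chain: "(x, y) \<in> ((\<alpha> \<union> \<beta>) \<inter> B \<times> B)\<^sup>*"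
  shows "(enc x, enc y) \<in> cjoin ar (nat_copy B A) (nat_copy_rel B \<alpha>) (nat_copy_rel B \<beta>)"
proof -
  let ?R = "nat_copy_rel B \<alpha> \<union> nat_copy_rel B \<beta>"
  have "(enc x, enc y) \<in> ?R\<^sup>*"
    by (rule rtrancl_map[OF _ chain]) (auto simp: enc_in_nat_copy_rel_iff)
  moreover have "?R \<subseteq> Nabla (nat_copy B A)"
    using Con_subset_Nabla[OF nat_copy_rel_Con[OF \<alpha>]] Con_subset_Nabla[OF nat_copy_rel_Con[OF \<beta>]]
    by blast
  ultimately show ?thesis
    unfolding cjoin_def using x
    by (intro Con_rtrancl_subset[OF Cg_Con[OF is_algebra_nat_copy] Cg_superset]) auto
qed

end

section \<open>Modularity of Con(A) and compactness of complemented congruences\<close>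

lemma countable_subuniverse_containing_chain:
  assumes fin: "finite (UNIV :: 'f set)" and alg: "is_algebra ar (A :: ('a, 'f) alg)"
    and R: "R \<subseteq> Nabla A" and xy: "(x, y) \<in> R\<^sup>*" "x \<in> alg_carrier A" "y \<in> alg_carrier A"
  shows "\<exists>B. countable_subuniverse ar A B \<and> x \<in> B \<and> y \<in> B \<and> (x, y) \<in> (R \<inter> B \<times> B)\<^sup>*"
proof -
  from rtrancl_finite_subset[OF xy(1)]
  obtain R' where R': "finite R'" "R' \<subseteq> R" "(x, y) \<in> R'\<^sup>*" by blast
  define B where "B = Sg ar A (insert x (insert y (Field R')))"
  have "Field R' \<subseteq> alg_carrier A" using R R'(2) unfolding Nabla_def Field_def by blast
  have "countable_subuniverse ar A B"
  proof
    show "countable B"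
      unfolding B_def using R'(1) by (intro countable_Sg[OF fin] countable_finite) (simp add: finite_Field)
    show "B \<noteq> {}" using subset_Sg[of _ ar A] unfolding B_def by blast
    show "B \<subseteq> alg_carrier A"
      unfolding B_def using xy(2,3) \<open>Field R' \<subseteq> alg_carrier A\<close> by (intro Sg_subset_carrier[OF alg]) auto
  qed (simp add: B_def Sg_closed)
  moreover have xyB: "insert x (insert y (Field R')) \<subseteq> B" unfolding B_def by (rule subset_Sg)
  moreover have "(x, y) \<in> (R \<inter> B \<times> B)\<^sup>*"
  proof -
    have "R' \<subseteq> R \<inter> B \<times> B" using R'(2) xyB by (auto intro: FieldI1 FieldI2)
    then show ?thesis using R'(3) rtrancl_mono by blast
  qed
  ultimately show ?thesis by blast
qed

theorem con_modular_if_congruence_modular_variety: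
  assumes fin: "finite (UNIV :: 'f set)" and wf: "wf_identities ar \<Sigma>"
    and cm: "congruence_modular_variety ar \<Sigma>" and var: "in_variety ar \<Sigma> (A :: ('a, 'f) alg)"
  shows "con_modular ar A"
  unfolding con_modular_def
proof (intro ballI impI subset_antisym)
  fix \<alpha> \<beta> \<gamma> assume \<alpha>: "\<alpha> \<in> Con ar A" and \<beta>: "\<beta> \<in> Con ar A" and \<gamma>: "\<gamma> \<in> Con ar A"
    and "\<alpha> \<subseteq> \<gamma>"
  show "cjoin ar A \<alpha> (\<beta> \<inter> \<gamma>) \<subseteq> cjoin ar A \<alpha> \<beta> \<inter> \<gamma>"
    using \<open>\<alpha> \<subseteq> \<gamma>\<close> by (rule cjoin_Int_subset[OF \<gamma>])
  have alg: "is_algebra ar A" using var unfolding in_variety_def by blast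
  show "cjoin ar A \<alpha> \<beta> \<inter> \<gamma> \<subseteq> cjoin ar A \<alpha> (\<beta> \<inter> \<gamma>)"
  proof (rule subrelI)
    fix x y assume xy: "(x, y) \<in> cjoin ar A \<alpha> \<beta> \<inter> \<gamma>"
    then have "(x, y) \<in> (\<alpha> \<union> \<beta>)\<^sup>*"
      using Cg_Union_subset_rtrancl[OF alg, of "{\<alpha>, \<beta>}"] \<alpha> \<beta> unfolding cjoin_def by auto
    moreover have "\<alpha> \<union> \<beta> \<subseteq> Nabla A" using Con_subset_Nabla[OF \<alpha>] Con_subset_Nabla[OF \<beta>] by blast
    moreover have "x \<in> alg_carrier A" "y \<in> alg_carrier A"
      using xy Con_subset_Nabla[OF \<gamma>] by (auto simp: Nabla_def)
    ultimately obtain B where "countable_subuniverse ar A B" and B: "x \<in> B" "y \<in> B"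
      and chain: "(x, y) \<in> ((\<alpha> \<union> \<beta>) \<inter> B \<times> B)\<^sup>*"
      using countable_subuniverse_containing_chain[OF fin alg] by blast
    then interpret countable_subuniverse ar A B by simp
    let ?A = "nat_copy B A" and ?r = "nat_copy_rel B"
    have "con_modular ar ?A"
      using cm in_variety_nat_copy[OF var wf] unfolding congruence_modular_variety_def by blast
    have "(enc x, enc y) \<in> cjoin ar ?A (?r \<alpha>) (?r \<beta>) \<inter> ?r \<gamma>"
      using enc_chain_in_cjoin_nat_copy[OF \<alpha> \<beta> B(1) chain] enc_in_nat_copy_rel_iff[OF B] xy
      by blast
    also have "\<dots> = cjoin ar ?A (?r \<alpha>) (?r \<beta> \<inter> ?r \<gamma>)"
      using \<open>con_modular ar ?A\<close> nat_copy_rel_Con[OF \<alpha>] nat_copy_rel_Con[OF \<beta>]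
        nat_copy_rel_Con[OF \<gamma>] nat_copy_rel_mono[OF \<open>\<alpha> \<subseteq> \<gamma>\<close>]
      unfolding con_modular_def by simp
    also have "\<dots> \<subseteq> ?r (cjoin ar A \<alpha> (\<beta> \<inter> \<gamma>))"
      unfolding nat_copy_rel_Int[symmetric]
      by (rule cjoin_nat_copy_rel_subset[OF alg \<alpha> Con_Int[OF alg \<beta> \<gamma>]])
    finally show "(x, y) \<in> cjoin ar A \<alpha> (\<beta> \<inter> \<gamma>)" using enc_in_nat_copy_rel_iff[OF B] by blast
  qed
qed

lemma cjoin_Nabla_compact_below:
  assumes alg: "is_algebra ar A" and Nabla_K: "Nabla A \<in> K ar A"
    and \<gamma>: "\<gamma> \<in> Con ar A" and \<delta>: "\<delta> \<in> Con ar A" and join: "cjoin ar A \<gamma> \<delta> = Nabla A"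
  shows "\<exists>\<gamma>'\<in>K ar A. \<gamma>' \<subseteq> \<gamma> \<and> cjoin ar A \<gamma>' \<delta> = Nabla A"
proof -
  define principal where "principal p = Cg ar A {p}" for p
  define S where "S = principal ` \<gamma> \<union> {\<delta>}"
  have S_Con: "S \<subseteq> Con ar A" unfolding S_def principal_def using Cg_Con[OF alg] \<delta> by blast
  have "p \<in> principal p" if "p \<in> \<gamma>" for p
    unfolding principal_def using that Con_subset_Nabla[OF \<gamma>] by (intro Cg_superset[THEN subsetD]) auto
  then have "\<gamma> \<union> \<delta> \<subseteq> \<Union>S" unfolding S_def by blast
  then have "Nabla A \<subseteq> Cg ar A (\<Union>S)"
    using join Cg_mono[of "\<gamma> \<union> \<delta>" "\<Union>S" ar A] unfolding cjoin_def by simp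
  then obtain T where T: "finite T" "T \<subseteq> S" "Nabla A \<subseteq> Cg ar A (\<Union>T)"
    using K_compactD[OF Nabla_K S_Con] by blast
  have "T - {\<delta>} \<subseteq> principal ` \<gamma>" "finite (T - {\<delta>})" using T unfolding S_def by auto
  then obtain P where P: "P \<subseteq> \<gamma>" "finite P" "T - {\<delta>} = principal ` P"
    using finite_subset_image[of "T - {\<delta>}" principal \<gamma>] by blast
  have "principal p \<subseteq> Cg ar A P" if "p \<in> P" for p
    unfolding principal_def using that by (intro Cg_mono) blast
  moreover have "T \<subseteq> insert \<delta> (principal ` P)" using P(3) by blast
  ultimately have "\<Union>T \<subseteq> Cg ar A P \<union> \<delta>" by blast
  then have "Nabla A \<subseteq> cjoin ar A (Cg ar A P) \<delta>"
    using T(3) Cg_mono[of "\<Union>T" "Cg ar A P \<union> \<delta>" ar A] unfolding cjoin_def by blast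
  then have "cjoin ar A (Cg ar A P) \<delta> = Nabla A"
    using Cg_subset_Nabla[of ar A "Cg ar A P \<union> \<delta>"] unfolding cjoin_def by blast
  moreover have "Cg ar A P \<in> K ar A"
    using P Con_subset_Nabla[OF \<gamma>] by (intro finite_Cg_K[OF alg]) auto
  moreover have "Cg ar A P \<subseteq> \<gamma>" by (rule Cg_least[OF \<gamma> P(1)])
  ultimately show ?thesis by blast
qed

theorem BCon_subset_K:
  assumes alg: "is_algebra ar A" and modular: "con_modular ar A" and Nabla_K: "Nabla A \<in> K ar A"
  shows "BCon ar A \<subseteq> K ar A"
proof
  fix \<gamma> assume "\<gamma> \<in> BCon ar A"
  then obtain \<delta> where \<gamma>: "\<gamma> \<in> Con ar A" and \<delta>: "\<delta> \<in> Con ar A"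
    and meet: "\<gamma> \<inter> \<delta> = Delta A" and join: "cjoin ar A \<gamma> \<delta> = Nabla A"
    unfolding BCon_def by blast
  obtain \<gamma>' where \<gamma>'_K: "\<gamma>' \<in> K ar A" and "\<gamma>' \<subseteq> \<gamma>" and join': "cjoin ar A \<gamma>' \<delta> = Nabla A"
    using cjoin_Nabla_compact_below[OF alg Nabla_K \<gamma> \<delta> join] by blast
  have \<gamma>'_Con: "\<gamma>' \<in> Con ar A" by (rule K_Con[OF \<gamma>'_K])
  have "\<gamma> = cjoin ar A \<gamma>' \<delta> \<inter> \<gamma>" using join' Con_subset_Nabla[OF \<gamma>] by blast
  also have "\<dots> = cjoin ar A \<gamma>' (\<delta> \<inter> \<gamma>)"
    using modular \<gamma>'_Con \<delta> \<gamma> \<open>\<gamma>' \<subseteq> \<gamma>\<close> unfolding con_modular_def by simp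
  also have "\<dots> = \<gamma>'"
  proof -
    have "Delta A \<subseteq> \<gamma>'" using Con_refl[OF \<gamma>'_Con] unfolding Delta_def by auto
    then show ?thesis using meet Cg_Con_eq[OF \<gamma>'_Con] unfolding cjoin_def by (simp add: Int_commute Un_absorb2)
  qed
  finally show "\<gamma> \<in> K ar A" using \<gamma>'_K by simp
qed

section \<open>Spectrum and reticulation\<close>

lemma Spec_Con: "\<phi> \<in> Spec ar A \<Longrightarrow> \<phi> \<in> Con ar A"
  unfolding Spec_def prime_con_def by blast

lemma V_subset_Spec: "V_A ar A \<theta> \<subseteq> Spec ar A"
  unfolding V_A_def by blast

lemma V_eq_Spec_minus_D: "V_A ar A \<theta> = Spec ar A - D_A ar A \<theta>"
  unfolding D_A_def V_A_def by blast

lemma V_Delta: "V_A ar A (Delta A) = Spec ar A"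
proof -
  have "Delta A \<subseteq> \<phi>" if "\<phi> \<in> Spec ar A" for \<phi>
    using Con_refl[OF Spec_Con[OF that]] unfolding Delta_def by auto
  then show ?thesis unfolding V_A_def by blast
qed

lemma V_Nabla: "V_A ar A (Nabla A) = {}"
proof -
  have "\<not> Nabla A \<subseteq> \<phi>" if "\<phi> \<in> Spec ar A" for \<phi>
    using that Con_subset_Nabla[OF Spec_Con[OF that]] unfolding Spec_def prime_con_def by blast
  then show ?thesis unfolding V_A_def by blast
qed

lemma V_cjoin:
  assumes "\<alpha> \<in> Con ar A" "\<beta> \<in> Con ar A"
  shows "V_A ar A (cjoin ar A \<alpha> \<beta>) = V_A ar A \<alpha> \<inter> V_A ar A \<beta>"
proof -
  have "\<alpha> \<union> \<beta> \<subseteq> cjoin ar A \<alpha> \<beta>"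
    unfolding cjoin_def using Con_subset_Nabla[OF assms(1)] Con_subset_Nabla[OF assms(2)]
    by (intro Cg_superset) blast
  moreover have "cjoin ar A \<alpha> \<beta> \<subseteq> \<phi>" if "\<phi> \<in> Spec ar A" "\<alpha> \<subseteq> \<phi>" "\<beta> \<subseteq> \<phi>" for \<phi>
    unfolding cjoin_def using that(2,3) by (intro Cg_least[OF Spec_Con[OF that(1)]]) blast
  ultimately show ?thesis unfolding V_A_def by blast
qed

lemma V_comm_subset:
  assumes "\<alpha> \<in> Con ar A" "\<beta> \<in> Con ar A"
  shows "V_A ar A (comm ar A \<alpha> \<beta>) \<subseteq> V_A ar A \<alpha> \<union> V_A ar A \<beta>"
  using assms unfolding V_A_def Spec_def prime_con_def by blast

lemma rho_eq_iff_V_eq: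
  assumes "\<alpha> \<subseteq> Nabla A" "\<beta> \<subseteq> Nabla A"
  shows "rho ar A \<alpha> = rho ar A \<beta> \<longleftrightarrow> V_A ar A \<alpha> = V_A ar A \<beta>"
proof
  have V_rho: "V_A ar A (rho ar A \<theta>) = V_A ar A \<theta>" if "\<theta> \<subseteq> Nabla A" for \<theta>
    using that unfolding V_A_def rho_def by blast
  show "rho ar A \<alpha> = rho ar A \<beta> \<Longrightarrow> V_A ar A \<alpha> = V_A ar A \<beta>"
    using V_rho[OF assms(1)] V_rho[OF assms(2)] by simp
  show "V_A ar A \<alpha> = V_A ar A \<beta> \<Longrightarrow> rho ar A \<alpha> = rho ar A \<beta>"
    unfolding rho_def V_A_def by simp
qed

lemma lam_eq_iff:
  assumes "\<alpha> \<in> K ar A"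
  shows "lam ar A \<alpha> = lam ar A \<beta> \<longleftrightarrow> \<beta> \<in> K ar A \<and> V_A ar A \<alpha> = V_A ar A \<beta>"
proof -
  have lam_K: "lam ar A \<theta> = {\<eta> \<in> K ar A. rho ar A \<theta> = rho ar A \<eta>}" if "\<theta> \<in> K ar A" for \<theta>
    using that unfolding lam_def retic_rel_def by blast
  have lam_not_K: "lam ar A \<theta> = {}" if "\<theta> \<notin> K ar A" for \<theta>
    using that unfolding lam_def retic_rel_def by blast
  have "\<alpha> \<in> lam ar A \<alpha>" using lam_K[OF assms] assms by blast
  then have "lam ar A \<alpha> = lam ar A \<beta> \<longleftrightarrow> \<beta> \<in> K ar A \<and> rho ar A \<alpha> = rho ar A \<beta>"
    using lam_K[OF assms] lam_K[of \<beta>] lam_not_K[of \<beta>] by auto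
  moreover have "rho ar A \<alpha> = rho ar A \<beta> \<longleftrightarrow> V_A ar A \<alpha> = V_A ar A \<beta>" if "\<beta> \<in> K ar A"
    using assms that by (intro rho_eq_iff_V_eq Con_subset_Nabla K_Con)
  ultimately show ?thesis by blast
qed

lemma D_Clop_if_V_complementary:
  assumes "\<alpha> \<in> Con ar A" "\<beta> \<in> Con ar A"
    and "V_A ar A \<alpha> \<union> V_A ar A \<beta> = Spec ar A" "V_A ar A \<alpha> \<inter> V_A ar A \<beta> = {}"
  shows "D_A ar A \<alpha> \<in> Clop ar A"
proof -
  have "Spec ar A - D_A ar A \<alpha> = D_A ar A \<beta>"
    using assms(3,4) V_subset_Spec unfolding D_A_def by blast
  then show ?thesis unfolding Clop_def spec_open_def using assms(1,2) by auto
qed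

lemma D_Clop_if_lam_complemented:
  assumes alg: "is_algebra ar A" and \<alpha>: "\<alpha> \<in> K ar A" and \<beta>: "\<beta> \<in> K ar A"
    and comm_K: "comm ar A \<alpha> \<beta> \<in> K ar A"
    and lam_comm: "lam ar A (comm ar A \<alpha> \<beta>) = lam ar A (Delta A)"
    and lam_cjoin: "lam ar A (cjoin ar A \<alpha> \<beta>) = lam ar A (Nabla A)"
  shows "Nabla A \<in> K ar A" and "D_A ar A \<alpha> \<in> Clop ar A"
proof -
  from lam_comm have "V_A ar A (comm ar A \<alpha> \<beta>) = Spec ar A"
    by (simp add: lam_eq_iff[OF comm_K] V_Delta)
  then have covers: "V_A ar A \<alpha> \<union> V_A ar A \<beta> = Spec ar A"
    using V_comm_subset[OF K_Con[OF \<alpha>] K_Con[OF \<beta>]] V_subset_Spec[of ar A \<alpha>] V_subset_Spec[of ar A \<beta>]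
    by blast
  from lam_cjoin show "Nabla A \<in> K ar A"
    by (simp add: lam_eq_iff[OF cjoin_K[OF alg \<alpha> \<beta>]])
  from lam_cjoin have "V_A ar A (cjoin ar A \<alpha> \<beta>) = {}"
    by (simp add: lam_eq_iff[OF cjoin_K[OF alg \<alpha> \<beta>]] V_Nabla)
  then have disjoint: "V_A ar A \<alpha> \<inter> V_A ar A \<beta> = {}"
    by (simp add: V_cjoin[OF K_Con[OF \<alpha>] K_Con[OF \<beta>]])
  show "D_A ar A \<alpha> \<in> Clop ar A"
    by (rule D_Clop_if_V_complementary[OF K_Con[OF \<alpha>] K_Con[OF \<beta>] covers disjoint])
qed

theorem theorem4p11:
  fixes ar :: "'f \<Rightarrow> nat"
    and \<Sigma> :: "(('f, nat) trm \<times> ('f, nat) trm) set"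
    and A :: "('a, 'f) alg"
  assumes "finite (UNIV :: 'f set)"
    and "wf_identities ar \<Sigma>"
    and "congruence_modular_variety ar \<Sigma>"
    and "semidegenerate_variety ar \<Sigma>"
    and "in_variety ar \<Sigma> A"
    and "\<forall>\<alpha>\<in>K ar A. \<forall>\<beta>\<in>K ar A. comm ar A \<alpha> \<beta> \<in> K ar A"
    and "D_boolean_iso ar A"
  shows "preserves_boolean_center ar A"
  unfolding preserves_boolean_center_def
proof
  have alg: "is_algebra ar A" using assms(5) unfolding in_variety_def by blast
  fix x assume "x \<in> BL ar A"
  then obtain \<alpha> \<beta> where \<alpha>: "\<alpha> \<in> K ar A" and \<beta>: "\<beta> \<in> K ar A" and x: "x = lam ar A \<alpha>"
    and "lam ar A (comm ar A \<alpha> \<beta>) = lam ar A (Delta A)"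
    and "lam ar A (cjoin ar A \<alpha> \<beta>) = lam ar A (Nabla A)"
    unfolding BL_def by blast
  moreover have "comm ar A \<alpha> \<beta> \<in> K ar A" using assms(6) \<alpha> \<beta> by blast
  ultimately have Nabla_K: "Nabla A \<in> K ar A" and "D_A ar A \<alpha> \<in> Clop ar A"
    using D_Clop_if_lam_complemented[OF alg] by blast+
  moreover have "bij_betw (D_A ar A) (BCon ar A) (Clop ar A)"
    using assms(7) unfolding D_boolean_iso_def by (rule conjunct1)
  ultimately obtain \<gamma> where \<gamma>: "\<gamma> \<in> BCon ar A" and D_\<gamma>: "D_A ar A \<gamma> = D_A ar A \<alpha>"
    by (metis bij_betw_imp_surj_on imageE)
  have "\<gamma> \<in> K ar A"
    using BCon_subset_K[OF alg con_modular_if_congruence_modular_variety[OF assms(1,2,3,5)] Nabla_K] \<gamma>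
    by blast
  moreover have "V_A ar A \<gamma> = V_A ar A \<alpha>" using D_\<gamma> by (simp add: V_eq_Spec_minus_D)
  ultimately have "lam ar A \<gamma> = x" using x \<alpha> by (simp add: lam_eq_iff)
  with \<gamma> show "\<exists>\<gamma>\<in>BCon ar A. lam ar A \<gamma> = x" by blast
qed

end
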